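(* Let $k\ge 1$, let $z_1,\dots,z_k\in\mathbb{C}$ be pairwise distinct with $|z_j|\le 1$ and $z_j\neq 1$ for $j=1,\dots,k$, and let $n,n_1,\dots,n_k\ge 1$ be integers with $n\ge 2$ and $\sum_{j=1}^k n_j\ge kn$. Let $$p(z)=(z-1)^n\prod_{j=1}^{k}(z-z_j)^{n_j},\quad z\in\mathbb{C}.$$ Then there exists $\zeta\neq 1$ such that $p'(\zeta)=0$ and $|\zeta-1/2|\le 1/2$. *)

theory Defs
  imports "HOL-Analysis.Analysis"
begin

end

theory Submission
  imports Defs "HOL-Computational_Algebra.Fundamental_Theorem_Algebra"
begin

(* Write \<zeta> = 1 + 1/v and z_j = 1 + 1/b_j. This moves the zero 1 of p to infinity, turns
   |z_j| \<le> 1 into Re b_j \<le> -1/2 and the disc |\<zeta> - 1/2| \<le> 1/2 into the half-plane Re v \<le> -1.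
   In these coordinates p'/p (\<zeta>) = v (n - \<Sum>j. m_j b_j / (v - b_j)), whose numerator is a
   polynomial of degree k with leading coefficient n and sum of roots \<Sum>j. (n + m_j) b_j / n.
   The real part of that sum is at most -(kn + \<Sum>j. m_j) / (2n) \<le> -k, so some root v has
   Re v \<le> -1; it is not a pole b_j, hence \<zeta> = 1 + 1/v is a critical point of p in the disc. *)

lemma degree_prod_linear_factors:
  fixes c :: "'a \<Rightarrow> 'b::idom"
  shows "degree (\<Prod>i\<in>A. [:- c i, 1:]) = card A"
  by (simp add: degree_prod_eq_sum_degree)

lemma lead_coeff_prod_linear_factors:
  fixes c :: "'a \<Rightarrow> 'b::idom"
  shows "coeff (\<Prod>i\<in>A. [:- c i, 1:]) (card A) = 1"
  using lead_coeff_prod[of "\<lambda>i. [:- c i, 1:]" A] by (simp add: degree_prod_linear_factors)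

lemma coeff_prod_linear_factors_pred:
  fixes c :: "'a \<Rightarrow> 'b::idom"
  assumes "finite A" "A \<noteq> {}"
  shows "coeff (\<Prod>i\<in>A. [:- c i, 1:]) (card A - 1) = - (\<Sum>i\<in>A. c i)"
  using assms
proof (induction A rule: finite_ne_induct)
  case (singleton x)
  then show ?case by simp
next
  case (insert x F)
  define P where "P = (\<Prod>i\<in>F. [:- c i, 1:])"
  obtain N where N: "card F = Suc N"
    using insert.hyps by (cases "card F") auto
  have "(\<Prod>i\<in>insert x F. [:- c i, 1:]) = smult (- c x) P + pCons 0 P"
    using insert.hyps by (simp add: P_def)
  moreover have "coeff P (card F) = 1"
    unfolding P_def by (rule lead_coeff_prod_linear_factors)
  ultimately show ?case
    using insert N by (simp add: P_def)
qed

lemma exists_root_Re_le_mean: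
  fixes p :: "complex poly"
  assumes "degree p > 0"
  shows "\<exists>v. poly p v = 0 \<and>
           real (degree p) * Re v \<le> Re (- coeff p (degree p - 1) / lead_coeff p)"
proof -
  obtain r where r: "smult (lead_coeff p) (\<Prod>i<degree p. [:- r i, 1:]) = p"
    using complex_poly_decompose' by blast
  have "p \<noteq> 0" using assms by auto
  have "coeff p (degree p - 1) = lead_coeff p * - (\<Sum>i<degree p. r i)"
    using coeff_prod_linear_factors_pred[of "{..<degree p}" r] assms
    by (metis r coeff_smult card_lessThan finite_lessThan lessThan_empty_iff not_less0)
  then have mean: "Re (- coeff p (degree p - 1) / lead_coeff p) = (\<Sum>i<degree p. Re (r i))"
    using \<open>p \<noteq> 0\<close> by simp
  obtain i where i: "i < degree p" "real (degree p) * Re (r i) \<le> (\<Sum>i<degree p. Re (r i))"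
  proof (rule ccontr)
    assume "\<not> thesis"
    then have "\<forall>i<degree p. (\<Sum>i<degree p. Re (r i)) < real (degree p) * Re (r i)"
      using that by (meson not_le)
    then have "(\<Sum>i<degree p. (\<Sum>i<degree p. Re (r i))) < (\<Sum>i<degree p. real (degree p) * Re (r i))"
      using assms by (intro sum_strict_mono) auto
    then show False by (simp add: sum_distrib_left)
  qed
  have "poly p (r i) = 0"
    using i(1) by (subst r [symmetric]) (auto simp: poly_prod)
  then show ?thesis using i mean by auto
qed

lemma Re_inverse_diff_one_le:
  fixes z :: complex
  assumes "norm z \<le> 1" "z \<noteq> 1"
  shows "Re (1 / (z - 1)) \<le> - 1/2"
proof -
  define a where "a = z - 1"
  have pos: "(norm a)\<^sup>2 > 0" using assms(2) by (simp add: a_def)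
  have "(norm (a + 1))\<^sup>2 \<le> 1"
    using assms(1) by (simp add: a_def power_le_one)
  then have "2 * Re a \<le> - (norm a)\<^sup>2"
    unfolding cmod_power2 by (simp add: power2_eq_square algebra_simps)
  with pos show ?thesis
    by (simp add: a_def [symmetric] Re_divide' divide_le_eq)
qed

lemma norm_inverse_add_half_le:
  fixes v :: complex
  assumes "Re v \<le> -1"
  shows "norm (1 / v + 1/2) \<le> 1/2"
proof -
  have "v \<noteq> 0" using assms by auto
  have "(norm (v + 2))\<^sup>2 \<le> (norm v)\<^sup>2"
    unfolding cmod_power2 using assms by (simp add: power2_eq_square algebra_simps)
  then have "norm (v + 2) \<le> norm v" by (simp add: power2_le_iff_abs_le)
  moreover have "1 / v + 1/2 = (v + 2) / (2 * v)" using \<open>v \<noteq> 0\<close> by (simp add: field_simps)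
  ultimately show ?thesis using \<open>v \<noteq> 0\<close> by (simp add: norm_divide norm_mult divide_le_eq)
qed

definition critical_poly :: "'a set \<Rightarrow> ('a \<Rightarrow> complex) \<Rightarrow> ('a \<Rightarrow> nat) \<Rightarrow> nat \<Rightarrow> complex poly" where
  "critical_poly K b m n =
     smult (of_nat n) (\<Prod>i\<in>K. [:- b i, 1:]) -
     (\<Sum>j\<in>K. smult (of_nat (m j) * b j) (\<Prod>i\<in>K - {j}. [:- b i, 1:]))"

lemma coeff_critical_poly_ge:
  assumes "finite K" "K \<noteq> {}" "card K \<le> d"
  shows "coeff (critical_poly K b m n) d = (if d = card K then of_nat n else 0)"
proof -
  have "card K > 0" using assms(1,2) by (simp add: card_gt_0_iff)
  then have "coeff (\<Prod>i\<in>K - {j}. [:- b i, 1:]) d = 0" if "j \<in> K" for j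
    using that assms by (intro coeff_eq_0) (simp add: degree_prod_linear_factors)
  moreover have "coeff (\<Prod>i\<in>K. [:- b i, 1:]) d = (if d = card K then 1 else 0)"
    using assms by (auto simp: lead_coeff_prod_linear_factors degree_prod_linear_factors intro: coeff_eq_0)
  ultimately show ?thesis by (simp add: critical_poly_def coeff_sum)
qed

lemma degree_critical_poly:
  assumes "finite K" "K \<noteq> {}" "n > 0"
  shows "degree (critical_poly K b m n) = card K"
proof (rule antisym)
  show "degree (critical_poly K b m n) \<le> card K"
    using assms by (intro degree_le) (simp add: coeff_critical_poly_ge)
  show "card K \<le> degree (critical_poly K b m n)"
    using assms by (intro le_degree) (simp add: coeff_critical_poly_ge)
qed

lemma coeff_critical_poly_pred:
  assumes "finite K" "K \<noteq> {}"
  shows "coeff (critical_poly K b m n) (card K - 1) = - (\<Sum>j\<in>K. (of_nat n + of_nat (m j)) * b j)"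
proof -
  have "coeff (\<Prod>i\<in>K - {j}. [:- b i, 1:]) (card K - 1) = 1" if "j \<in> K" for j
    using lead_coeff_prod_linear_factors[of b "K - {j}"] that assms by simp
  moreover have "coeff (\<Prod>i\<in>K. [:- b i, 1:]) (card K - 1) = - (\<Sum>j\<in>K. b j)"
    using assms by (rule coeff_prod_linear_factors_pred)
  ultimately show ?thesis
    by (simp add: critical_poly_def coeff_sum sum_distrib_left sum.distrib algebra_simps)
qed

lemma poly_critical_poly:
  assumes "finite K" "v \<notin> b ` K"
  shows "poly (critical_poly K b m n) v =
           (\<Prod>i\<in>K. v - b i) * (of_nat n - (\<Sum>j\<in>K. of_nat (m j) * b j / (v - b j)))"
proof -
  have "(\<Prod>i\<in>K - {j}. v - b i) = (\<Prod>i\<in>K. v - b i) / (v - b j)" if "j \<in> K" for j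
  proof -
    have "v - b j \<noteq> 0" using assms(2) that by auto
    then show ?thesis
      by (simp add: prod.remove[OF assms(1) that] nonzero_eq_divide_eq)
  qed
  then show ?thesis
    by (simp add: critical_poly_def poly_sum poly_prod sum_distrib_left algebra_simps cong: sum.cong)
qed

lemma poly_critical_poly_at_pole_neq_0:
  assumes "finite K" "j \<in> K" "inj_on b K" "b j \<noteq> 0" "m j \<noteq> 0"
  shows "poly (critical_poly K b m n) (b j) \<noteq> 0"
proof -
  define Q where "Q l = poly (\<Prod>i\<in>K - {l}. [:- b i, 1:]) (b j)" for l
  have "poly (\<Prod>i\<in>K. [:- b i, 1:]) (b j) = 0"
    using assms(1,2) by (auto simp: poly_prod intro: prod_zero)
  moreover have "Q l = 0" if "l \<in> K - {j}" for l
    using that assms(1,2) by (auto simp: Q_def poly_prod intro: prod_zero)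
  ultimately have "poly (critical_poly K b m n) (b j) = - (of_nat (m j) * b j * Q j)"
    using assms(1,2) by (simp add: critical_poly_def poly_sum sum.remove[of K j] Q_def [symmetric])
  moreover have "Q j \<noteq> 0"
    using assms(1-3) by (auto simp: Q_def poly_prod inj_on_def)
  ultimately show ?thesis using assms(4,5) by simp
qed

lemma exists_critical_poly_root_Re_le:
  assumes "finite K" "K \<noteq> {}" "n > 0"
    and "\<And>j. j \<in> K \<Longrightarrow> Re (b j) \<le> -1/2"
    and "card K * n \<le> (\<Sum>j\<in>K. m j)"
  shows "\<exists>v. poly (critical_poly K b m n) v = 0 \<and> Re v \<le> -1"
proof -
  let ?p = "critical_poly K b m n"
  have deg: "degree ?p = card K" "card K > 0"
    using assms(1-3) by (simp_all add: degree_critical_poly card_gt_0_iff)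
  have "Re (- coeff ?p (degree ?p - 1) / lead_coeff ?p) =
          (\<Sum>j\<in>K. (real n + real (m j)) * Re (b j)) / real n"
    unfolding deg(1) coeff_critical_poly_pred [OF assms(1,2)]
    by (simp add: coeff_critical_poly_ge [OF assms(1,2)] Re_sum)
  also have "\<dots> \<le> (\<Sum>j\<in>K. (real n + real (m j)) * (-1/2)) / real n"
    using assms(4) by (intro divide_right_mono sum_mono mult_left_mono) auto
  also have "\<dots> = - ((real (card K * n) + real (\<Sum>j\<in>K. m j)) / (2 * real n))"
    unfolding sum_distrib_right [symmetric] by (simp add: sum.distrib)
  also have "\<dots> \<le> - real (card K)"
    using of_nat_mono [OF assms(5), where 'a = real] assms(3) by (simp add: pos_le_divide_eq mult.commute)
  finally have mean: "Re (- coeff ?p (degree ?p - 1) / lead_coeff ?p) \<le> - real (card K)" .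
  obtain v where root: "poly ?p v = 0"
    and "real (degree ?p) * Re v \<le> Re (- coeff ?p (degree ?p - 1) / lead_coeff ?p)"
    using exists_root_Re_le_mean [of ?p] deg by auto
  with mean deg have "real (card K) * Re v \<le> real (card K) * -1" by simp
  then have "Re v \<le> -1" using deg(2) by (simp only: mult_le_cancel_left_pos of_nat_0_less_iff)
  with root show ?thesis by blast
qed

lemma has_field_derivative_prod_powers:
  fixes a :: "'i \<Rightarrow> 'a::real_normed_field"
  assumes "\<zeta> \<notin> a ` A"
  shows "((\<lambda>w. \<Prod>j\<in>A. (w - a j) ^ m j) has_field_derivative
           (\<Prod>j\<in>A. (\<zeta> - a j) ^ m j) * (\<Sum>j\<in>A. of_nat (m j) / (\<zeta> - a j))) (at \<zeta>)"
proof -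
  have nz: "\<zeta> - a j \<noteq> 0" if "j \<in> A" for j
    using assms that by auto
  have "((\<lambda>w. \<Prod>j\<in>A. (w - a j) ^ m j) has_field_derivative (\<Prod>j\<in>A. (\<zeta> - a j) ^ m j) *
          (\<Sum>j\<in>A. of_nat (m j) * (\<zeta> - a j) ^ (m j - 1) / (\<zeta> - a j) ^ m j)) (at \<zeta>)"
    by (rule has_field_derivative_prod' [where f = "\<lambda>j w. (w - a j) ^ m j"])
       (use nz in \<open>auto intro!: derivative_eq_intros\<close>)
  moreover have "of_nat (m j) * (\<zeta> - a j) ^ (m j - 1) / (\<zeta> - a j) ^ m j = of_nat (m j) / (\<zeta> - a j)"
    if "j \<in> A" for j
    using nz [OF that] by (cases "m j") (simp_all add: field_simps)
  ultimately show ?thesis by (simp cong: sum.cong)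
qed

lemma deriv_eq_0_if_log_deriv_eq_0:
  fixes a :: "'i \<Rightarrow> 'a::real_normed_field"
  assumes "\<zeta> \<noteq> c" "\<zeta> \<notin> a ` A"
    and "of_nat n / (\<zeta> - c) + (\<Sum>j\<in>A. of_nat (m j) / (\<zeta> - a j)) = 0"
  shows "deriv (\<lambda>w. (w - c) ^ n * (\<Prod>j\<in>A. (w - a j) ^ m j)) \<zeta> = 0"
proof -
  let ?Q = "\<Prod>j\<in>A. (\<zeta> - a j) ^ m j" and ?S = "\<Sum>j\<in>A. of_nat (m j) / (\<zeta> - a j)"
  have D: "((\<lambda>w. (w - c) ^ n * (\<Prod>j\<in>A. (w - a j) ^ m j)) has_field_derivative
          of_nat n * (\<zeta> - c) ^ (n - 1) * ?Q + (\<zeta> - c) ^ n * (?Q * ?S)) (at \<zeta>)"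
    using has_field_derivative_prod_powers [OF assms(2)] by (auto intro!: derivative_eq_intros)
  have "of_nat n * (\<zeta> - c) ^ (n - 1) = (\<zeta> - c) ^ n * (of_nat n / (\<zeta> - c))"
    using assms(1) by (cases n) (auto simp: field_simps)
  then have "of_nat n * (\<zeta> - c) ^ (n - 1) * ?Q + (\<zeta> - c) ^ n * (?Q * ?S) =
               (\<zeta> - c) ^ n * ?Q * (of_nat n / (\<zeta> - c) + ?S)"
    by (simp add: algebra_simps)
  with DERIV_imp_deriv [OF D] assms(3) show ?thesis by simp
qed

lemma log_deriv_inverse_coordinates:
  fixes v :: complex
  assumes "v \<noteq> 0" "\<And>j. j \<in> A \<Longrightarrow> b j \<noteq> 0" "v \<notin> b ` A"
  shows "of_nat n / (1 + 1/v - 1) + (\<Sum>j\<in>A. of_nat (m j) / (1 + 1/v - (1 + 1 / b j))) =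
           v * (of_nat n - (\<Sum>j\<in>A. of_nat (m j) * b j / (v - b j)))"
proof -
  have "of_nat (m j) / (1 + 1/v - (1 + 1 / b j)) = - (v * (of_nat (m j) * b j / (v - b j)))"
    if "j \<in> A" for j
  proof -
    have "v - b j \<noteq> 0" "b j - v \<noteq> 0" using assms(3) that by auto
    then show ?thesis using assms(1,2) that by (simp add: field_simps)
  qed
  then show ?thesis
    using assms(1) by (simp add: sum_negf sum_distrib_left algebra_simps cong: sum.cong)
qed

lemma deriv_eq_0_at_critical_poly_root:
  assumes "finite K" "\<And>j. j \<in> K \<Longrightarrow> b j \<noteq> 0" "v \<noteq> 0" "v \<notin> b ` K"
    and "poly (critical_poly K b m n) v = 0"
  shows "deriv (\<lambda>w. (w - 1) ^ n * (\<Prod>j\<in>K. (w - (1 + 1 / b j)) ^ m j)) (1 + 1/v) = 0"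
proof (rule deriv_eq_0_if_log_deriv_eq_0)
  show "1 + 1/v \<noteq> 1" using assms(3) by simp
  show "1 + 1/v \<notin> (\<lambda>j. 1 + 1 / b j) ` K" using assms(4) by auto
  have "(\<Prod>i\<in>K. v - b i) \<noteq> 0" using assms(1,4) by auto
  then have "of_nat n - (\<Sum>j\<in>K. of_nat (m j) * b j / (v - b j)) = 0"
    using poly_critical_poly [OF assms(1,4)] assms(5) by simp
  then show "of_nat n / (1 + 1/v - 1) + (\<Sum>j\<in>K. of_nat (m j) / (1 + 1/v - (1 + 1 / b j))) = 0"
    using log_deriv_inverse_coordinates [OF assms(3,2,4), where n = n and m = m]
    by (metis mult_zero_right)
qed

theorem exists_critical_point_in_disc:
  fixes z :: "'i \<Rightarrow> complex"
  assumes "finite K" "K \<noteq> {}" "inj_on z K"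
    and "\<And>j. j \<in> K \<Longrightarrow> norm (z j) \<le> 1 \<and> z j \<noteq> 1 \<and> m j \<noteq> 0"
    and "n > 0" "card K * n \<le> (\<Sum>j\<in>K. m j)"
  shows "\<exists>\<zeta>. \<zeta> \<noteq> 1 \<and> deriv (\<lambda>w. (w - 1) ^ n * (\<Prod>j\<in>K. (w - z j) ^ m j)) \<zeta> = 0 \<and>
           norm (\<zeta> - 1/2) \<le> 1/2"
proof -
  define b where "b j = 1 / (z j - 1)" for j
  have z_eq: "z j = 1 + 1 / b j" and b_neq_0: "b j \<noteq> 0" if "j \<in> K" for j
    using assms(4) [OF that] by (simp_all add: b_def)
  have b_inj: "inj_on b K"
    using assms(3) by (auto simp: inj_on_def z_eq)
  have Re_b: "Re (b j) \<le> -1/2" if "j \<in> K" for j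
    unfolding b_def using assms(4) [OF that] by (intro Re_inverse_diff_one_le) auto
  obtain v where root: "poly (critical_poly K b m n) v = 0" and Re_v: "Re v \<le> -1"
    using exists_critical_poly_root_Re_le [where b = b, OF assms(1,2,5) Re_b assms(6)] by blast
  have v: "v \<noteq> 0" "v \<notin> b ` K"
    using Re_v root poly_critical_poly_at_pole_neq_0 [OF assms(1) _ b_inj b_neq_0] assms(4) by force+
  have "(\<lambda>w. (w - 1) ^ n * (\<Prod>j\<in>K. (w - z j) ^ m j)) =
          (\<lambda>w. (w - 1) ^ n * (\<Prod>j\<in>K. (w - (1 + 1 / b j)) ^ m j))"
    by (simp add: z_eq cong: prod.cong)
  then have "deriv (\<lambda>w. (w - 1) ^ n * (\<Prod>j\<in>K. (w - z j) ^ m j)) (1 + 1/v) = 0"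
    using deriv_eq_0_at_critical_poly_root [OF assms(1) b_neq_0 v root] by simp
  moreover have "norm (1 + 1/v - 1/2) \<le> 1/2"
    using norm_inverse_add_half_le [OF Re_v] by (simp add: add.commute)
  ultimately show ?thesis
    using v(1) by (intro exI [of _ "1 + 1/v"]) simp
qed

theorem corollary1:
  fixes k n :: nat and z :: "nat \<Rightarrow> complex" and m :: "nat \<Rightarrow> nat"
  assumes "k \<ge> 1"
    and "inj_on z {1..k}"
    and "\<And>j. j \<in> {1..k} \<Longrightarrow> norm (z j) \<le> 1"
    and "\<And>j. j \<in> {1..k} \<Longrightarrow> z j \<noteq> 1"
    and "\<And>j. j \<in> {1..k} \<Longrightarrow> m j \<ge> 1"
    and "n \<ge> 2"
    and "(\<Sum>j=1..k. m j) \<ge> k * n"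
  shows "\<exists>\<zeta>. \<zeta> \<noteq> 1 \<and>
           deriv (\<lambda>w. (w - 1) ^ n * (\<Prod>j=1..k. (w - z j) ^ m j)) \<zeta> = 0 \<and>
           norm (\<zeta> - 1/2) \<le> 1/2"
  using assms by (intro exists_critical_point_in_disc) (force simp: Suc_le_eq)+

end
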